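(* Let $\mathfrak{B}$ be a finite cyclic group, of order at least $3$, of invertible diagonal $2\times2$ complex matrices, containing three pairwise linearly independent matrices. Let $n\ge3$ and let $F$ be a Boolean function of arity $2n$ such that every function of arity less than $2n$ realizable by a gadget of $\#(\{F\}\cup\mathfrak{B})$ lies in $\lambda\langle\mathfrak{B}\rangle$. Then either $F$ is the zero function, or there exist two distinct variables $x,y$ of $F$ such that both $F^{00}_{xy}$ and $F^{11}_{xy}$ are nonzero functions.
   Context: Matrices in $\mathfrak{B}$ are binary functions $M(u,v)=M_{uv}$. $\#\mathcal{G}$: input a finite multigraph whose vertices carry functions from $\mathcal{G}$ of arity equal to the degree (edges act as binary equality); output the sum over $\{0,1\}$-edge assignments of the product of vertex functions. Gadgets are such networks with dangling edges; realizable functions are their functions. $\langle\mathfrak{B}\rangle$ is the set of functions $x\mapsto\prod_{j=1}^m M_j(x_{\pi(2j-1)},x_{\pi(2j)})$ with $\pi$ a permutation of the $2m$ variables and $M_j\in\mathfrak{B}$; $\lambda\langle\mathfrak{B}\rangle=\{\lambda f:\lambda\in\mathbb{C},f\in\langle\mathfrak{B}\rangle\}$. For variables $x,y$ of $F$ and $a,b\in\{0,1\}$, $F^{ab}_{xy}$ is the arity-$(2n-2)$ function obtained from $F$ by fixing $x=a$, $y=b$. *)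

theory Defs
  imports "HOL-Analysis.Analysis" "HOL-Library.FuncSet"
begin

text \<open>Matrices are complex 2x2 matrices; index 1 corresponds to the Boolean value 0 (False),
  index 2 to the value 1 (True).\<close>

fun mpow :: "complex^2^2 \<Rightarrow> nat \<Rightarrow> complex^2^2" where
  "mpow A 0 = mat 1"
| "mpow A (Suc k) = A ** mpow A k"

definition diagonal2 :: "complex^2^2 \<Rightarrow> bool" where
  "diagonal2 M \<longleftrightarrow> (\<forall>i j. i \<noteq> j \<longrightarrow> M $ i $ j = 0)"

definition finite_cyclic_group :: "(complex^2^2) set \<Rightarrow> bool" where
  "finite_cyclic_group B \<longleftrightarrow> finite B \<and> (\<exists>g. B = range (mpow g))"

definition lin_indep2 :: "complex^2^2 \<Rightarrow> complex^2^2 \<Rightarrow> bool" where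
  "lin_indep2 M N \<longleftrightarrow>
     (\<forall>a b::complex. (\<forall>i j. a * M $ i $ j + b * N $ i $ j = 0) \<longrightarrow> a = 0 \<and> b = 0)"

definition bidx :: "bool \<Rightarrow> 2" where
  "bidx u = (if u then 2 else 1)"

definition matf :: "complex^2^2 \<Rightarrow> bool \<Rightarrow> bool \<Rightarrow> complex" where
  "matf M u v = M $ bidx u $ bidx v"

text \<open>A signature: an arity together with a function on Boolean lists (only lists of
  that length matter).\<close>
type_synonym sig = "nat \<times> (bool list \<Rightarrow> complex)"

definition sig_of_mat :: "complex^2^2 \<Rightarrow> sig" where
  "sig_of_mat M = (2, \<lambda>x. matf M (x ! 0) (x ! 1))"

text \<open>Gadgets: m vertices labelled by lab i (arity, function); vertex i has ports (i,j), j < arity.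
  Dangling edges 0..<k are attached to the ports ext 0, ..., ext (k-1); the remaining ports are
  matched into internal edges by the fixed-point-free involution pr.\<close>
definition ports :: "nat \<Rightarrow> (nat \<Rightarrow> sig) \<Rightarrow> (nat \<times> nat) set" where
  "ports m lab = {(i, j). i < m \<and> j < fst (lab i)}"

definition internal_ports :: "nat \<Rightarrow> (nat \<Rightarrow> sig) \<Rightarrow> nat \<Rightarrow> (nat \<Rightarrow> nat \<times> nat) \<Rightarrow> (nat \<times> nat) set" where
  "internal_ports m lab k ext = ports m lab - ext ` {..<k}"

definition wf_gadget :: "sig set \<Rightarrow> nat \<Rightarrow> (nat \<Rightarrow> sig) \<Rightarrow> nat \<Rightarrow> (nat \<Rightarrow> nat \<times> nat)
    \<Rightarrow> (nat \<times> nat \<Rightarrow> nat \<times> nat) \<Rightarrow> bool" where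
  "wf_gadget G m lab k ext pr \<longleftrightarrow>
     (\<forall>i<m. lab i \<in> G) \<and> inj_on ext {..<k} \<and> ext ` {..<k} \<subseteq> ports m lab \<and>
     (\<forall>p \<in> internal_ports m lab k ext.
        pr p \<in> internal_ports m lab k ext \<and> pr p \<noteq> p \<and> pr (pr p) = p)"

text \<open>Value of the gadget on the dangling-edge assignment x: sum over all {0,1}-assignments
  of the edges (encoded as port assignments constant along every edge) of the product of the
  vertex functions.\<close>
definition gadget_fun :: "nat \<Rightarrow> (nat \<Rightarrow> sig) \<Rightarrow> nat \<Rightarrow> (nat \<Rightarrow> nat \<times> nat)
    \<Rightarrow> (nat \<times> nat \<Rightarrow> nat \<times> nat) \<Rightarrow> bool list \<Rightarrow> complex" where
  "gadget_fun m lab k ext pr x =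
     (\<Sum>\<tau> \<in> {\<tau> \<in> PiE (ports m lab) (\<lambda>_. UNIV).
              (\<forall>p \<in> internal_ports m lab k ext. \<tau> p = \<tau> (pr p)) \<and> (\<forall>i<k. \<tau> (ext i) = x ! i)}.
        \<Prod>i<m. snd (lab i) (map (\<lambda>j. \<tau> (i, j)) [0..<fst (lab i)]))"

definition realizable :: "sig set \<Rightarrow> nat \<Rightarrow> (bool list \<Rightarrow> complex) \<Rightarrow> bool" where
  "realizable G k f \<longleftrightarrow>
     (\<exists>m lab ext pr. wf_gadget G m lab k ext pr \<and>
        (\<forall>x. length x = k \<longrightarrow> gadget_fun m lab k ext pr x = f x))"

definition in_lam_span :: "(complex^2^2) set \<Rightarrow> nat \<Rightarrow> (bool list \<Rightarrow> complex) \<Rightarrow> bool" where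
  "in_lam_span B k f \<longleftrightarrow>
     (\<exists>(c::complex) m \<pi> Ms. k = 2 * m \<and> bij_betw \<pi> {..<2*m} {..<2*m} \<and> (\<forall>j<m. Ms j \<in> B) \<and>
        (\<forall>x. length x = k \<longrightarrow>
           f x = c * (\<Prod>j<m. matf (Ms j) (x ! \<pi> (2*j)) (x ! \<pi> (2*j+1)))))"

definition pinned_nonzero :: "nat \<Rightarrow> (bool list \<Rightarrow> complex) \<Rightarrow> nat \<Rightarrow> nat \<Rightarrow> bool \<Rightarrow> bool \<Rightarrow> bool" where
  "pinned_nonzero k F x y a b \<longleftrightarrow>
     (\<exists>z. length z = k \<and> z ! x = a \<and> z ! y = b \<and> F z \<noteq> 0)"

end

theory Submission
  imports Defs
begin

(* Suppose F is nonzero but no pair of variables has both F^00 and F^11 nonzero. Among any five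
   entries of a nonzero input z of F there are two disjoint pairs {x,y}, {u,v} on which z is
   constant. Joining x and y by an edge gives a gadget of arity 2n - 2; since F^{cc}_{xy} vanishes
   for the value c opposite to z_x, this gadget just computes F with x = y = z_x pinned. It lies in
   lambda<B>, whose supports are closed under complementing all inputs because the matrices of B
   are diagonal and invertible. Hence F stays nonzero after complementing z outside {x,y}; this
   flips the common value of z on {u,v}, so both F^00_uv and F^11_uv are nonzero, a contradiction. *)

lemma bool_equal_pair_among_three:
  fixes b :: "'a \<Rightarrow> bool"
  assumes "p \<noteq> q" "p \<noteq> s" "q \<noteq> s"
  obtains x y r where "{x, y, r} = {p, q, s}" "x \<noteq> y" "x \<noteq> r" "y \<noteq> r" "b x = b y"
  using assms by (cases "b p = b q"; cases "b p = b s") (blast, blast, blast, blast)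

lemma bool_two_disjoint_equal_pairs:
  fixes b :: "nat \<Rightarrow> bool"
  obtains x y u v where "distinct [x, y, u, v]" "x < 5" "y < 5" "u < 5" "v < 5"
    "b x = b y" "b u = b v"
proof -
  obtain x y r where xyr: "{x, y, r} = {0, 1, 2::nat}" "x \<noteq> y" "x \<noteq> r" "y \<noteq> r" "b x = b y"
    using bool_equal_pair_among_three[where b = b and p = "0::nat" and q = 1 and s = 2] by auto
  then have "x \<in> {0, 1, 2}" "y \<in> {0, 1, 2}" "r \<in> {0, 1, 2}" by blast+
  then have "x < 3" "y < 3" "r < 3" by auto
  obtain u v t where uvt: "{u, v, t} = {r, 3, 4}" "u \<noteq> v" "u \<noteq> t" "v \<noteq> t" "b u = b v"
    using bool_equal_pair_among_three[where b = b and p = r and q = 3 and s = 4] \<open>r < 3\<close> by auto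
  then have "u \<in> {r, 3, 4}" "v \<in> {r, 3, 4}" by blast+
  then have "distinct [x, y, u, v]" "u < 5" "v < 5"
    using xyr(2-4) \<open>x < 3\<close> \<open>y < 3\<close> \<open>r < 3\<close> uvt(2) by auto
  with \<open>x < 3\<close> \<open>y < 3\<close> xyr(5) uvt(5) show thesis
    using that[of x y u v] by simp
qed

lemma matf_diag_nonzero:
  assumes "invertible M" "diagonal2 M"
  shows "matf M a a \<noteq> 0"
proof -
  have "M $ 1 $ 2 = 0" "M $ 2 $ 1 = 0" using assms(2) by (auto simp: diagonal2_def)
  moreover have "det M \<noteq> 0" using assms(1) invertible_det_nz by blast
  ultimately have "M $ 1 $ 1 \<noteq> 0" "M $ 2 $ 2 \<noteq> 0" by (auto simp: det_2)
  then show ?thesis by (cases a) (auto simp: matf_def bidx_def)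
qed

lemma matf_nonzero_imp_eq:
  assumes "diagonal2 M" "matf M a b \<noteq> 0"
  shows "a = b"
  using assms unfolding diagonal2_def matf_def bidx_def by (auto split: if_splits)

lemma in_lam_span_nonzero_map_Not:
  assumes B: "\<forall>M\<in>B. invertible M \<and> diagonal2 M"
    and f: "in_lam_span B k f" and w: "length w = k" "f w \<noteq> 0"
  shows "f (map Not w) \<noteq> 0"
proof -
  obtain c m \<pi> Ms where k: "k = 2 * m" and \<pi>: "bij_betw \<pi> {..<2*m} {..<2*m}"
    and Ms: "\<forall>j<m. Ms j \<in> B"
    and f_eq: "\<And>x. length x = k \<Longrightarrow> f x = c * (\<Prod>j<m. matf (Ms j) (x ! \<pi> (2*j)) (x ! \<pi> (2*j+1)))"
    using f unfolding in_lam_span_def by blast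
  have \<pi>_less: "\<pi> (2*j) < k" "\<pi> (2*j+1) < k" if "j < m" for j
    using \<pi> that k unfolding bij_betw_def by auto
  have "c * (\<Prod>j<m. matf (Ms j) (w ! \<pi> (2*j)) (w ! \<pi> (2*j+1))) \<noteq> 0"
    using w f_eq by simp
  then have c: "c \<noteq> 0"
    and factor: "\<And>j. j < m \<Longrightarrow> matf (Ms j) (w ! \<pi> (2*j)) (w ! \<pi> (2*j+1)) \<noteq> 0"
    by auto
  have paired: "w ! \<pi> (2*j) = w ! \<pi> (2*j+1)" if "j < m" for j
    using matf_nonzero_imp_eq factor B Ms that by blast
  have "f (map Not w) = c * (\<Prod>j<m. matf (Ms j) (map Not w ! \<pi> (2*j)) (map Not w ! \<pi> (2*j+1)))"
    using f_eq w by simp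
  also have "\<dots> = c * (\<Prod>j<m. matf (Ms j) (\<not> w ! \<pi> (2*j)) (\<not> w ! \<pi> (2*j)))"
    using w \<pi>_less paired by (intro arg_cong[where f = "(*) c"] prod.cong) auto
  also have "\<dots> \<noteq> 0" using c matf_diag_nonzero B Ms by auto
  finally show ?thesis .
qed

lemma bij_betw_port_assignment_list:
  "bij_betw (\<lambda>\<tau>. map (\<lambda>j. \<tau> (i, j)) [0..<N]) (PiE ({i} \<times> {..<N}) (\<lambda>_. UNIV)) {z. length z = N}"
proof (rule bij_betw_byWitness[where f' = "\<lambda>z. restrict (\<lambda>p. z ! snd p) ({i} \<times> {..<N})"])
  show "\<forall>\<tau> \<in> PiE ({i} \<times> {..<N}) (\<lambda>_. UNIV).
          restrict (\<lambda>p. map (\<lambda>j. \<tau> (i, j)) [0..<N] ! snd p) ({i} \<times> {..<N}) = \<tau>"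
    by (auto simp: PiE_iff extensional_def fun_eq_iff)
  show "\<forall>z \<in> {z. length z = N}. map (\<lambda>j. restrict (\<lambda>p. z ! snd p) ({i} \<times> {..<N}) (i, j)) [0..<N] = z"
    by (auto intro: nth_equalityI)
  show "(\<lambda>z. restrict (\<lambda>p. z ! snd p) ({i} \<times> {..<N})) ` {z. length z = N}
          \<subseteq> PiE ({i} \<times> {..<N}) (\<lambda>_. UNIV)"
    by (intro image_subsetI) simp
qed auto

lemma gadget_fun_one_vertex:
  fixes N k :: nat and e :: "nat \<Rightarrow> nat" and F :: "bool list \<Rightarrow> complex"
  defines "lab \<equiv> \<lambda>_::nat. (N, F)" and "ext \<equiv> \<lambda>i. (0::nat, e i)"
  assumes wf: "wf_gadget G 1 lab k ext pr"
  shows "gadget_fun 1 lab k ext pr w =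
    (\<Sum>z | length z = N \<and> (\<forall>p \<in> internal_ports 1 lab k ext. z ! snd p = z ! snd (pr p))
        \<and> (\<forall>i<k. z ! e i = w ! i). F z)"
proof -
  have ports: "ports 1 lab = {0} \<times> {..<N}"
    unfolding ports_def lab_def by auto
  have internal: "p \<in> ports 1 lab" "pr p \<in> ports 1 lab" if "p \<in> internal_ports 1 lab k ext" for p
    using wf that unfolding wf_gadget_def internal_ports_def by auto
  have "ext i \<in> ports 1 lab" if "i < k" for i
    using wf that unfolding wf_gadget_def by auto
  then have e: "e i < N" if "i < k" for i
    using that unfolding ports ext_def by auto
  have "bij_betw (\<lambda>\<tau>. map (\<lambda>j. \<tau> (0, j)) [0..<N])
    {\<tau> \<in> PiE (ports 1 lab) (\<lambda>_. UNIV). (\<forall>p \<in> internal_ports 1 lab k ext. \<tau> p = \<tau> (pr p))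
        \<and> (\<forall>i<k. \<tau> (ext i) = w ! i)}
    {z \<in> {z. length z = N}. (\<forall>p \<in> internal_ports 1 lab k ext. z ! snd p = z ! snd (pr p))
        \<and> (\<forall>i<k. z ! e i = w ! i)}"
    unfolding ports
  proof (rule bij_betw_Collect[OF bij_betw_port_assignment_list])
    fix \<tau> :: "nat \<times> nat \<Rightarrow> bool"
    have "map (\<lambda>j. \<tau> (0, j)) [0..<N] ! snd p = \<tau> p" if "p \<in> {0} \<times> {..<N}" for p
      using that by auto
    then show "((\<forall>p \<in> internal_ports 1 lab k ext.
                  map (\<lambda>j. \<tau> (0, j)) [0..<N] ! snd p = map (\<lambda>j. \<tau> (0, j)) [0..<N] ! snd (pr p))
              \<and> (\<forall>i<k. map (\<lambda>j. \<tau> (0, j)) [0..<N] ! e i = w ! i))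
          \<longleftrightarrow> (\<forall>p \<in> internal_ports 1 lab k ext. \<tau> p = \<tau> (pr p)) \<and> (\<forall>i<k. \<tau> (ext i) = w ! i)"
      using internal e unfolding ports ext_def by auto
  qed
  then show ?thesis
    unfolding gadget_fun_def by (simp add: lab_def sum.reindex_bij_betw[symmetric])
qed

lemma self_loop_consistent_inputs:
  assumes xy: "x < N" "y < N" and e: "e ` {..<k} = {..<N} - {x, y}" and z: "length z = N"
  shows "{z'. length z' = N \<and> z' ! x = z' ! y \<and> (\<forall>i<k. z' ! e i = z ! e i)}
           = {z[x := False, y := False], z[x := True, y := True]}"
proof (intro equalityI subsetI)
  fix z' assume "z' \<in> {z'. length z' = N \<and> z' ! x = z' ! y \<and> (\<forall>i<k. z' ! e i = z ! e i)}"
  then have z': "length z' = N" "z' ! y = z' ! x" "\<And>i. i < k \<Longrightarrow> z' ! e i = z ! e i"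
    by auto
  have "z' = z[x := z' ! x, y := z' ! x]"
  proof (rule nth_equalityI)
    fix j assume "j < length z'"
    moreover have "j \<in> e ` {..<k}" if "j < N" "j \<noteq> x" "j \<noteq> y"
      using e that by auto
    ultimately show "z' ! j = z[x := z' ! x, y := z' ! x] ! j"
      using z z' xy by (cases "j = x \<or> j = y") (auto simp: nth_list_update)
  qed (simp add: z z')
  then obtain a where "z' = z[x := a, y := a]" by blast
  then show "z' \<in> {z[x := False, y := False], z[x := True, y := True]}"
    by (cases a) auto
next
  fix z' assume "z' \<in> {z[x := False, y := False], z[x := True, y := True]}"
  then obtain a where z': "z' = z[x := a, y := a]" by blast
  have "x \<noteq> e i" "y \<noteq> e i" if "i < k" for i
    using e that by auto
  then show "z' \<in> {z'. length z' = N \<and> z' ! x = z' ! y \<and> (\<forall>i<k. z' ! e i = z ! e i)}"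
    using z xy unfolding z' by (simp add: nth_list_update)
qed

lemma self_loop_realizable:
  fixes F :: "bool list \<Rightarrow> complex"
  assumes F: "(N, F) \<in> G" and xy: "x < N" "y < N" "x \<noteq> y"
    and e: "bij_betw e {..<N - 2} ({..<N} - {x, y})"
  obtains f where "realizable G (N - 2) f"
    and "\<And>z. length z = N \<Longrightarrow>
      f (map (\<lambda>i. z ! e i) [0..<N - 2]) = F (z[x := False, y := False]) + F (z[x := True, y := True])"
proof -
  let ?lab = "\<lambda>_::nat. (N, F)" and ?ext = "\<lambda>i. (0::nat, e i)" and ?k = "N - 2"
  define pr :: "nat \<times> nat \<Rightarrow> nat \<times> nat"
    where "pr p = (if p = (0, x) then (0, y) else if p = (0, y) then (0, x) else p)" for p
  have e_image: "e ` {..<?k} = {..<N} - {x, y}"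
    using e unfolding bij_betw_def by auto
  have ports: "ports 1 ?lab = {0} \<times> {..<N}"
    unfolding ports_def by auto
  have ext_image: "?ext ` {..<?k} = {0} \<times> ({..<N} - {x, y})"
    using e_image by auto
  have internal: "internal_ports 1 ?lab ?k ?ext = {(0, x), (0, y)}"
    unfolding internal_ports_def ports ext_image using xy by auto
  have wf: "wf_gadget G 1 ?lab ?k ?ext pr"
    unfolding wf_gadget_def
  proof (intro conjI)
    show "inj_on ?ext {..<?k}"
      using e unfolding bij_betw_def inj_on_def by auto
    show "\<forall>p\<in>internal_ports 1 ?lab ?k ?ext.
            pr p \<in> internal_ports 1 ?lab ?k ?ext \<and> pr p \<noteq> p \<and> pr (pr p) = p"
      unfolding internal pr_def using xy by auto
  qed (use F in \<open>auto simp: ports_def ext_image\<close>)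
  have "gadget_fun 1 ?lab ?k ?ext pr (map (\<lambda>i. z ! e i) [0..<?k])
          = F (z[x := False, y := False]) + F (z[x := True, y := True])"
    if z: "length z = N" for z
  proof -
    have "gadget_fun 1 ?lab ?k ?ext pr (map (\<lambda>i. z ! e i) [0..<?k])
            = (\<Sum>z' | length z' = N \<and> z' ! x = z' ! y \<and> (\<forall>i<?k. z' ! e i = z ! e i). F z')"
      unfolding gadget_fun_one_vertex[OF wf] internal using xy
      by (intro sum.cong Collect_cong refl) (simp add: pr_def eq_commute[of "_ ! y"])
    moreover have "z[x := False, y := False] \<noteq> z[x := True, y := True]"
    proof
      assume "z[x := False, y := False] = z[x := True, y := True]"
      from arg_cong[where f = "\<lambda>l. l ! x", OF this] show False
        using z xy by simp
    qed
    ultimately show ?thesis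
      using self_loop_consistent_inputs[OF xy(1,2) e_image z] by simp
  qed
  with wf show thesis
    using that[of "gadget_fun 1 ?lab ?k ?ext pr"] unfolding realizable_def by blast
qed

lemma nonzero_complement_outside_pair:
  fixes F :: "bool list \<Rightarrow> complex"
  assumes B: "\<forall>M\<in>B. invertible M \<and> diagonal2 M"
    and span: "\<And>f. realizable G (N - 2) f \<Longrightarrow> in_lam_span B (N - 2) f"
    and F: "(N, F) \<in> G" and xy: "x < N" "y < N" "x \<noteq> y"
    and z: "length z = N" "z ! x = c" "z ! y = c" "F z \<noteq> 0"
    and not_pinned: "\<not> pinned_nonzero N F x y (\<not> c) (\<not> c)"
  shows "F ((map Not z)[x := c, y := c]) \<noteq> 0"
proof -
  have "card ({..<N} - {x, y}) = N - 2"
    using xy by (simp add: card_Diff_subset)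
  then obtain e where e: "bij_betw e {..<N - 2} ({..<N} - {x, y})"
    using ex_bij_betw_nat_finite[of "{..<N} - {x, y}"] by (auto simp: atLeast0LessThan)
  obtain f where f: "realizable G (N - 2) f"
    and f_eq: "\<And>z. length z = N \<Longrightarrow>
      f (map (\<lambda>i. z ! e i) [0..<N - 2]) = F (z[x := False, y := False]) + F (z[x := True, y := True])"
    using self_loop_realizable[OF F xy e] by blast
  have f_pinned: "f (map (\<lambda>i. u ! e i) [0..<N - 2]) = F u"
    if u: "length u = N" "u ! x = c" "u ! y = c" for u
  proof -
    have "u[x := c] = u" "u[y := c] = u"
      using u xy by (simp_all add: list_update_same_conv)
    then have "u[x := c, y := c] = u" by simp
    moreover have "length (u[x := \<not> c, y := \<not> c]) = N"
      "u[x := \<not> c, y := \<not> c] ! x = (\<not> c)" "u[x := \<not> c, y := \<not> c] ! y = (\<not> c)"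
      using u xy by auto
    then have "F (u[x := \<not> c, y := \<not> c]) = 0"
      using not_pinned unfolding pinned_nonzero_def by blast
    ultimately show ?thesis using f_eq[OF u(1)] by (cases c) auto
  qed
  define z' where "z' = (map Not z)[x := c, y := c]"
  have "e i < N" "x \<noteq> e i" "y \<noteq> e i" if "i < N - 2" for i
    using e that unfolding bij_betw_def by auto
  then have "map Not (map (\<lambda>i. z ! e i) [0..<N - 2]) = map (\<lambda>i. z' ! e i) [0..<N - 2]"
    using z unfolding z'_def by simp
  moreover have "f (map (\<lambda>i. z ! e i) [0..<N - 2]) \<noteq> 0"
    using f_pinned z by simp
  moreover have "length (map (\<lambda>i. z ! e i) [0..<N - 2]) = N - 2"
    by simp
  ultimately have "f (map (\<lambda>i. z' ! e i) [0..<N - 2]) \<noteq> 0"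
    using in_lam_span_nonzero_map_Not[OF B span[OF f]] by metis
  moreover have z': "length z' = N" "z' ! x = c" "z' ! y = c"
    using z xy unfolding z'_def by auto
  ultimately have "F z' \<noteq> 0"
    using f_pinned[OF z'] by simp
  then show ?thesis
    unfolding z'_def .
qed

lemma pinned_nonzero_pair_exists:
  fixes F :: "bool list \<Rightarrow> complex"
  assumes B: "\<forall>M\<in>B. invertible M \<and> diagonal2 M"
    and span: "\<And>f. realizable G (N - 2) f \<Longrightarrow> in_lam_span B (N - 2) f"
    and F: "(N, F) \<in> G" and N: "5 \<le> N" and z: "length z = N" "F z \<noteq> 0"
  shows "\<exists>x<N. \<exists>y<N. x \<noteq> y \<and> pinned_nonzero N F x y False False \<and> pinned_nonzero N F x y True True"
proof (rule ccontr)
  assume "\<not> ?thesis"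
  then have no_pair: "\<not> pinned_nonzero N F x y (\<not> c) (\<not> c)"
    if "x < N" "y < N" "x \<noteq> y" "pinned_nonzero N F x y c c" for x y c
    using that by (cases c) auto
  obtain x y u v where xyuv: "distinct [x, y, u, v]" "x < 5" "y < 5" "u < 5" "v < 5"
      "z ! x = z ! y" "z ! u = z ! v"
    using bool_two_disjoint_equal_pairs[of "(!) z"] by blast
  with N have less: "x < N" "y < N" "u < N" "v < N"
    by auto
  have "pinned_nonzero N F x y (z ! x) (z ! x)"
    unfolding pinned_nonzero_def using z xyuv by auto
  then have "F ((map Not z)[x := z ! x, y := z ! x]) \<noteq> 0"
    using nonzero_complement_outside_pair[OF B span F less(1,2)] no_pair less z xyuv by simp
  then have "pinned_nonzero N F u v (\<not> z ! u) (\<not> z ! u)"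
    unfolding pinned_nonzero_def using z xyuv less
    by (intro exI[of _ "(map Not z)[x := z ! x, y := z ! x]"]) auto
  moreover have "pinned_nonzero N F u v (z ! u) (z ! u)"
    unfolding pinned_nonzero_def using z xyuv by auto
  ultimately show False
    using no_pair less xyuv by auto
qed

theorem mainTheorem13:
  fixes B :: "(complex^2^2) set" and n :: nat and F :: "bool list \<Rightarrow> complex"
  assumes B_cyc: "finite_cyclic_group B"
    and B_card: "card B \<ge> 3"
    and B_inv: "\<forall>M\<in>B. invertible M \<and> diagonal2 M"
    and B_indep: "\<exists>M1\<in>B. \<exists>M2\<in>B. \<exists>M3\<in>B.
                    lin_indep2 M1 M2 \<and> lin_indep2 M1 M3 \<and> lin_indep2 M2 M3"
    and n3: "n \<ge> 3"
    and hyp: "\<forall>k f. k < 2 * n \<longrightarrow>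
                realizable (insert (2 * n, F) (sig_of_mat ` B)) k f \<longrightarrow> in_lam_span B k f"
  shows "(\<forall>z. length z = 2 * n \<longrightarrow> F z = 0) \<or>
         (\<exists>x<2*n. \<exists>y<2*n. x \<noteq> y \<and>
            pinned_nonzero (2 * n) F x y False False \<and> pinned_nonzero (2 * n) F x y True True)"
proof (cases "\<forall>z. length z = 2 * n \<longrightarrow> F z = 0")
  case False
  then obtain z where z: "length z = 2 * n" "F z \<noteq> 0"
    by blast
  have span: "in_lam_span B (2 * n - 2) f"
    if "realizable (insert (2 * n, F) (sig_of_mat ` B)) (2 * n - 2) f" for f
    using hyp that n3 by simp
  show ?thesis
    using pinned_nonzero_pair_exists[where N = "2 * n" and F = F, OF B_inv span _ _ z] n3 by simp
qed simp

end
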